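(* For every nonnegative integer $n$, the number of permutations in $\mathfrak S_n$ that avoid each of the classical patterns $132$, $3214$ and $4213$ is $|\mathrm{Av}_n(132,3214,4213)|=2^n-n$.
   Context: $\mathfrak S_n$ is the set of permutations of $\{1,\dots,n\}$ (with $\mathfrak S_0$ consisting of the empty permutation). A permutation $\tau$ contains a classical pattern $\sigma\in\mathfrak S_k$ if it has a subsequence $\tau_{i_1}\cdots\tau_{i_k}$ ($i_1<\dots<i_k$) with the same relative order as $\sigma$; otherwise it avoids $\sigma$. $\mathrm{Av}_n(\dots)$ denotes the set of permutations in $\mathfrak S_n$ avoiding all listed patterns. *)

theory Defs
  imports Main
begin

definition perms :: "nat \<Rightarrow> nat list set" where
  "perms n = {xs. distinct xs \<and> set xs = {1..n}}"

definition contains :: "nat list \<Rightarrow> nat list \<Rightarrow> bool" where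
  "contains tau sigma \<longleftrightarrow>
     (\<exists>idx :: nat \<Rightarrow> nat.
        (\<forall>a b. a < b \<and> b < length sigma \<longrightarrow> idx a < idx b) \<and>
        (\<forall>a < length sigma. idx a < length tau) \<and>
        (\<forall>a < length sigma. \<forall>b < length sigma.
            (tau ! idx a < tau ! idx b) \<longleftrightarrow> (sigma ! a < sigma ! b)))"

definition avoids :: "nat list \<Rightarrow> nat list \<Rightarrow> bool" where
  "avoids tau sigma \<longleftrightarrow> \<not> contains tau sigma"

definition Av :: "nat \<Rightarrow> nat list list \<Rightarrow> nat list set" where
  "Av n pats = {tau \<in> perms n. \<forall>sigma \<in> set pats. avoids tau sigma}"

end

theory Submission
  imports Defs "HOL-Library.Sublist"
begin

(* In a 132-avoiding permutation of {1..n+1}, every entry to the left of the maximum n+1 exceeds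
   every entry to its right, so the permutation is (\<alpha> \<oplus> 1) \<ominus> \<beta> for permutations \<alpha> and \<beta>
   with |\<alpha>| + |\<beta>| = n.  An occurrence of a pattern in (\<alpha> \<oplus> 1) \<ominus> \<beta> splits as (\<sigma>1 \<oplus> \<sigma>2) \<ominus> \<sigma>3
   with \<sigma>1 occurring in \<alpha>, |\<sigma>2| \<le> 1 and \<sigma>3 occurring in \<beta>.  Running through these splits,
   (\<alpha> \<oplus> 1) \<ominus> \<beta> avoids 132, 3214 and 4213 iff \<alpha> avoids 132 and 321 and \<beta> avoids 132 and 213.
   The same decomposition gives c(n+1) = \<Sum>m\<le>n. c(m) for c(n) = |Av_n(132, 213)|, so c(n+1) = 2^n,
   and b(n+1) = b(n) + n for b(n) = |Av_n(132, 321)|.  Hence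
   |Av_{n+1}(132, 3214, 4213)| = \<Sum>m\<le>n. b(n-m) c(m) = 2^(n+1) - (n+1). *)

section \<open>Pattern containment via order-isomorphic subsequences\<close>

definition order_iso :: "'a::linorder list \<Rightarrow> 'b::linorder list \<Rightarrow> bool" where
  "order_iso xs ys \<longleftrightarrow> length xs = length ys \<and>
     (\<forall>i < length xs. \<forall>j < length xs. xs ! i < xs ! j \<longleftrightarrow> ys ! i < ys ! j)"

lemma order_iso_sym: "order_iso xs ys \<Longrightarrow> order_iso ys xs"
  by (simp add: order_iso_def)

lemma order_iso_trans: "order_iso xs ys \<Longrightarrow> order_iso ys zs \<Longrightarrow> order_iso xs zs"
  by (simp add: order_iso_def)

lemma order_iso_iff_zip:
  "order_iso xs ys \<longleftrightarrow> length xs = length ys \<and>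
     (\<forall>a b c d. (a, c) \<in> set (zip xs ys) \<longrightarrow> (b, d) \<in> set (zip xs ys) \<longrightarrow> a < b \<longleftrightarrow> c < d)"
proof -
  have "(\<forall>a b c d. (a, c) \<in> set (zip xs ys) \<longrightarrow> (b, d) \<in> set (zip xs ys) \<longrightarrow> a < b \<longleftrightarrow> c < d) \<longleftrightarrow>
     (\<forall>i < length xs. \<forall>j < length xs. xs ! i < xs ! j \<longleftrightarrow> ys ! i < ys ! j)"
    if "length xs = length ys"
    using that by (simp add: set_zip) blast
  then show ?thesis
    unfolding order_iso_def by blast
qed

lemma order_iso_append:
  fixes xs xs' :: "'a::linorder list" and ys ys' :: "'b::linorder list"
  assumes "length xs = length ys"
    and xs: "\<forall>a\<in>set xs. \<forall>b\<in>set xs'. (a < b \<longleftrightarrow> up) \<and> a \<noteq> b"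
    and ys: "\<forall>c\<in>set ys. \<forall>d\<in>set ys'. (c < d \<longleftrightarrow> up) \<and> c \<noteq> d"
  shows "order_iso (xs @ xs') (ys @ ys') \<longleftrightarrow> order_iso xs ys \<and> order_iso xs' ys'"
proof -
  have cross: "(a < b \<longleftrightarrow> c < d) \<and> (b < a \<longleftrightarrow> d < c)"
    if "a \<in> set xs" "b \<in> set xs'" "c \<in> set ys" "d \<in> set ys'" for a b c d
  proof -
    have "a < b \<longleftrightarrow> up" "a \<noteq> b" "c < d \<longleftrightarrow> up" "c \<noteq> d"
      using xs ys that by blast+
    then show ?thesis by (metis less_asym neqE)
  qed
  show ?thesis
    using assms(1) cross unfolding order_iso_iff_zip
    by (auto simp: zip_append) (meson set_zip_leftD set_zip_rightD)+
qed

lemma order_iso_append_split: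
  fixes xs xs' :: "'a::linorder list" and \<sigma> :: "'b::linorder list"
  assumes iso: "order_iso (xs @ xs') \<sigma>"
    and xs: "\<forall>a\<in>set xs. \<forall>b\<in>set xs'. (a < b \<longleftrightarrow> up) \<and> a \<noteq> b"
  obtains ys ys' where "\<sigma> = ys @ ys'" "\<forall>c\<in>set ys. \<forall>d\<in>set ys'. (c < d \<longleftrightarrow> up) \<and> c \<noteq> d"
    "order_iso xs ys" "order_iso xs' ys'"
proof -
  define ys ys' where "ys = take (length xs) \<sigma>" and "ys' = drop (length xs) \<sigma>"
  have \<sigma>: "\<sigma> = ys @ ys'"
    by (simp add: ys_def ys'_def)
  have len: "length xs = length ys" "length xs' = length ys'"
    using iso by (auto simp: order_iso_def ys_def ys'_def)
  have zip: "\<forall>a b c d. (a, c) \<in> set (zip xs ys) \<union> set (zip xs' ys') \<longrightarrow>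
      (b, d) \<in> set (zip xs ys) \<union> set (zip xs' ys') \<longrightarrow> a < b \<longleftrightarrow> c < d"
    using iso len unfolding order_iso_iff_zip \<sigma> by (simp add: zip_append)
  have ys: "\<forall>c\<in>set ys. \<forall>d\<in>set ys'. (c < d \<longleftrightarrow> up) \<and> c \<noteq> d"
  proof (intro ballI)
    fix c d assume "c \<in> set ys" "d \<in> set ys'"
    then obtain a b where ac: "(a, c) \<in> set (zip xs ys)" and bd: "(b, d) \<in> set (zip xs' ys')"
      using len in_set_impl_in_set_zip2 by metis
    then have "a \<in> set xs" "b \<in> set xs'"
      by (auto dest: set_zip_leftD)
    then have "(a < b \<longleftrightarrow> up) \<and> a \<noteq> b"
      using xs by blast
    moreover have "a < b \<longleftrightarrow> c < d" "b < a \<longleftrightarrow> d < c"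
      using zip ac bd by blast+
    ultimately show "(c < d \<longleftrightarrow> up) \<and> c \<noteq> d"
      by (metis less_irrefl neqE)
  qed
  have "order_iso xs ys \<and> order_iso xs' ys'"
    using iso order_iso_append[OF len(1) xs ys] by (simp add: \<sigma>)
  then show ?thesis
    using that \<sigma> ys by blast
qed

lemma subseq_iff_indices:
  "subseq xs ys \<longleftrightarrow>
     (\<exists>ixs. sorted_wrt (<) ixs \<and> set ixs \<subseteq> {..<length ys} \<and> xs = map ((!) ys) ixs)"
proof
  assume "subseq xs ys"
  then show "\<exists>ixs. sorted_wrt (<) ixs \<and> set ixs \<subseteq> {..<length ys} \<and> xs = map ((!) ys) ixs"
  proof induction
    case (list_emb_Nil ys)
    show ?case by (intro exI[of _ "[]"]) simp
  next
    case (list_emb_Cons xs ys y)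
    then obtain ixs where "sorted_wrt (<) ixs" "set ixs \<subseteq> {..<length ys}" "xs = map ((!) ys) ixs"
      by blast
    then show ?case by (intro exI[of _ "map Suc ixs"]) (auto simp: sorted_wrt_map)
  next
    case (list_emb_Cons2 x y xs ys)
    then obtain ixs where "sorted_wrt (<) ixs" "set ixs \<subseteq> {..<length ys}" "xs = map ((!) ys) ixs"
      by blast
    with list_emb_Cons2.hyps(1) show ?case
      by (intro exI[of _ "0 # map Suc ixs"]) (auto simp: sorted_wrt_map)
  qed
next
  assume "\<exists>ixs. sorted_wrt (<) ixs \<and> set ixs \<subseteq> {..<length ys} \<and> xs = map ((!) ys) ixs"
  then obtain ixs where "sorted_wrt (<) ixs" "set ixs \<subseteq> {..<length ys}" "xs = map ((!) ys) ixs"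
    by blast
  then have "subseq (map ((!) ys) ixs) (map ((!) ys) [0..<length ys])"
    by (intro subseq_map sorted_subset_imp_subseq) (auto simp: sorted_wrt_mono_rel)
  then show "subseq xs ys"
    by (simp add: \<open>xs = map ((!) ys) ixs\<close> map_nth)
qed

lemma set_subseq_subset: "subseq xs ys \<Longrightarrow> set xs \<subseteq> set ys"
  by (auto elim: list_emb_set)

lemma contains_iff_subseq:
  "contains \<tau> \<sigma> \<longleftrightarrow> (\<exists>ys. subseq ys \<tau> \<and> order_iso ys \<sigma>)"
proof
  assume "contains \<tau> \<sigma>"
  then obtain idx where mono: "\<forall>a b. a < b \<and> b < length \<sigma> \<longrightarrow> idx a < idx b"
    and bound: "\<forall>a < length \<sigma>. idx a < length \<tau>"
    and iso: "\<forall>a < length \<sigma>. \<forall>b < length \<sigma>. \<tau> ! idx a < \<tau> ! idx b \<longleftrightarrow> \<sigma> ! a < \<sigma> ! b"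
    unfolding contains_def by blast
  define ixs where "ixs = map idx [0..<length \<sigma>]"
  have "subseq (map ((!) \<tau>) ixs) \<tau>"
    unfolding subseq_iff_indices using mono bound
    by (intro exI[of _ ixs]) (auto simp: ixs_def sorted_wrt_iff_nth_less)
  moreover have "order_iso (map ((!) \<tau>) ixs) \<sigma>"
    using iso by (simp add: order_iso_def ixs_def)
  ultimately show "\<exists>ys. subseq ys \<tau> \<and> order_iso ys \<sigma>" by blast
next
  assume "\<exists>ys. subseq ys \<tau> \<and> order_iso ys \<sigma>"
  then obtain ixs where "sorted_wrt (<) ixs" "set ixs \<subseteq> {..<length \<tau>}"
    and "order_iso (map ((!) \<tau>) ixs) \<sigma>"
    unfolding subseq_iff_indices by blast
  then show "contains \<tau> \<sigma>"
    unfolding contains_def order_iso_def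
    by (intro exI[of _ "(!) ixs"]) (auto simp: sorted_wrt_iff_nth_less subset_iff)
qed

lemma contains_order_iso: "order_iso \<sigma> \<sigma>' \<Longrightarrow> contains \<tau> \<sigma> \<longleftrightarrow> contains \<tau> \<sigma>'"
  unfolding contains_iff_subseq by (meson order_iso_sym order_iso_trans)

lemma contains_subpattern:
  assumes "contains \<tau> \<sigma>" and "subseq \<rho> \<sigma>" and "order_iso \<rho> \<sigma>'"
  shows "contains \<tau> \<sigma>'"
proof -
  obtain ys where "subseq ys \<tau>" and iso: "order_iso ys \<sigma>"
    using assms(1) contains_iff_subseq by blast
  obtain ixs where ixs: "sorted_wrt (<) ixs" "set ixs \<subseteq> {..<length \<sigma>}" "\<rho> = map ((!) \<sigma>) ixs"
    using assms(2) subseq_iff_indices by blast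
  have "subseq (map ((!) ys) ixs) ys"
    unfolding subseq_iff_indices using ixs iso by (auto simp: order_iso_def)
  then have "subseq (map ((!) ys) ixs) \<tau>"
    using \<open>subseq ys \<tau>\<close> by (rule subseq_order.order_trans)
  moreover have "order_iso (map ((!) ys) ixs) \<rho>"
    using ixs iso by (auto simp: order_iso_def subset_iff)
  ultimately have "contains \<tau> \<rho>"
    unfolding contains_iff_subseq by blast
  then show ?thesis
    using contains_order_iso[OF assms(3)] by blast
qed

lemma contains_Nil [simp]: "contains \<tau> []"
  by (simp add: contains_def)

lemma contains_length: "contains \<tau> \<sigma> \<Longrightarrow> length \<sigma> \<le> length \<tau>"
  unfolding contains_iff_subseq order_iso_def using list_emb_length by fastforce

lemma Nil_contains_iff [simp]: "contains [] \<sigma> \<longleftrightarrow> \<sigma> = []"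
  using contains_length by fastforce

lemma contains_singleton [simp]: "contains \<tau> [a] \<longleftrightarrow> \<tau> \<noteq> []"
  unfolding contains_def by (cases \<tau>) auto

lemma singleton_contains_iff: "contains [x] \<sigma> \<longleftrightarrow> length \<sigma> \<le> 1"
proof
  show "contains [x] \<sigma> \<Longrightarrow> length \<sigma> \<le> 1"
    using contains_length by fastforce
  show "length \<sigma> \<le> 1 \<Longrightarrow> contains [x] \<sigma>"
    by (cases \<sigma>) auto
qed

lemma contains_map_strict_mono:
  assumes "strict_mono f"
  shows "contains (map f \<tau>) \<sigma> \<longleftrightarrow> contains \<tau> \<sigma>"
  unfolding contains_def
  by (intro ex_cong1 conj_cong refl) (auto simp: strict_mono_less[OF assms])

text \<open>For \<open>up = True\<close> this describes the occurrences of a pattern in a direct sum \<open>A \<oplus> B\<close>,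
  for \<open>up = False\<close> those in a skew sum \<open>A \<ominus> B\<close>.\<close>

lemma contains_append_iff:
  assumes AB: "\<forall>a\<in>set A. \<forall>b\<in>set B. (a < b \<longleftrightarrow> up) \<and> a \<noteq> b"
  shows "contains (A @ B) \<sigma> \<longleftrightarrow>
    (\<exists>\<sigma>1 \<sigma>2. \<sigma> = \<sigma>1 @ \<sigma>2 \<and> (\<forall>p\<in>set \<sigma>1. \<forall>q\<in>set \<sigma>2. (p < q \<longleftrightarrow> up) \<and> p \<noteq> q) \<and>
      contains A \<sigma>1 \<and> contains B \<sigma>2)"
proof
  assume "contains (A @ B) \<sigma>"
  then obtain ys1 ys2 where sub: "subseq ys1 A" "subseq ys2 B" and iso: "order_iso (ys1 @ ys2) \<sigma>"
    unfolding contains_iff_subseq subseq_append_iff by blast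
  have "\<forall>a\<in>set ys1. \<forall>b\<in>set ys2. (a < b \<longleftrightarrow> up) \<and> a \<noteq> b"
    using AB set_subseq_subset[OF sub(1)] set_subseq_subset[OF sub(2)] by blast
  with iso obtain \<sigma>1 \<sigma>2 where "\<sigma> = \<sigma>1 @ \<sigma>2" "\<forall>p\<in>set \<sigma>1. \<forall>q\<in>set \<sigma>2. (p < q \<longleftrightarrow> up) \<and> p \<noteq> q"
    "order_iso ys1 \<sigma>1" "order_iso ys2 \<sigma>2"
    by (rule order_iso_append_split)
  then show "\<exists>\<sigma>1 \<sigma>2. \<sigma> = \<sigma>1 @ \<sigma>2 \<and> (\<forall>p\<in>set \<sigma>1. \<forall>q\<in>set \<sigma>2. (p < q \<longleftrightarrow> up) \<and> p \<noteq> q) \<and>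
      contains A \<sigma>1 \<and> contains B \<sigma>2"
    using sub unfolding contains_iff_subseq by blast
next
  assume "\<exists>\<sigma>1 \<sigma>2. \<sigma> = \<sigma>1 @ \<sigma>2 \<and> (\<forall>p\<in>set \<sigma>1. \<forall>q\<in>set \<sigma>2. (p < q \<longleftrightarrow> up) \<and> p \<noteq> q) \<and>
      contains A \<sigma>1 \<and> contains B \<sigma>2"
  then obtain \<sigma>1 \<sigma>2 ys1 ys2 where \<sigma>: "\<sigma> = \<sigma>1 @ \<sigma>2"
    and cross: "\<forall>p\<in>set \<sigma>1. \<forall>q\<in>set \<sigma>2. (p < q \<longleftrightarrow> up) \<and> p \<noteq> q"
    and sub: "subseq ys1 A" "subseq ys2 B" and iso: "order_iso ys1 \<sigma>1" "order_iso ys2 \<sigma>2"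
    unfolding contains_iff_subseq by blast
  have cross_ys: "\<forall>a\<in>set ys1. \<forall>b\<in>set ys2. (a < b \<longleftrightarrow> up) \<and> a \<noteq> b"
    using AB set_subseq_subset[OF sub(1)] set_subseq_subset[OF sub(2)] by blast
  have "length ys1 = length \<sigma>1"
    using iso(1) by (simp add: order_iso_def)
  then have "order_iso (ys1 @ ys2) \<sigma>"
    unfolding \<sigma> using order_iso_append[OF _ cross_ys cross] iso by blast
  moreover have "subseq (ys1 @ ys2) (A @ B)"
    using sub by (rule list_emb_append_mono)
  ultimately show "contains (A @ B) \<sigma>"
    unfolding contains_iff_subseq by blast
qed

lemma order_iso_132: "a < b \<Longrightarrow> b < c \<Longrightarrow> order_iso [a, c, b] [1, 3, 2::nat]"
  by (auto simp: order_iso_def less_Suc_eq numeral_3_eq_3 nth_Cons')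

lemma contains_21_iff: "contains \<tau> [2, 1] \<longleftrightarrow> (\<exists>i j. i < j \<and> j < length \<tau> \<and> \<tau> ! j < \<tau> ! i)"
proof
  assume "contains \<tau> [2, 1]"
  then obtain idx where mono: "\<forall>a b. a < b \<and> b < length [2, 1::nat] \<longrightarrow> idx a < idx b"
    and bound: "\<forall>a < length [2, 1::nat]. idx a < length \<tau>"
    and iso: "\<forall>a < length [2, 1::nat]. \<forall>b < length [2, 1::nat].
      \<tau> ! idx a < \<tau> ! idx b \<longleftrightarrow> [2, 1::nat] ! a < [2, 1] ! b"
    unfolding contains_def by blast
  then have "idx 0 < idx 1" "idx 1 < length \<tau>" "\<tau> ! idx 1 < \<tau> ! idx 0"
    using mono[rule_format, of 0 1] bound[rule_format, of 1] iso[rule_format, of 1 0] by simp_all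
  then show "\<exists>i j. i < j \<and> j < length \<tau> \<and> \<tau> ! j < \<tau> ! i"
    by blast
next
  assume "\<exists>i j. i < j \<and> j < length \<tau> \<and> \<tau> ! j < \<tau> ! i"
  then obtain i j where "i < j" "j < length \<tau>" "\<tau> ! j < \<tau> ! i"
    by blast
  then show "contains \<tau> [2, 1]"
    unfolding contains_def
    by (intro exI[of _ "\<lambda>a. if a = 0 then i else j"]) (auto simp: less_2_cases_iff)
qed

lemma avoids_21_iff_sorted:
  assumes "distinct \<tau>"
  shows "\<not> contains \<tau> [2, 1] \<longleftrightarrow> sorted_wrt (<) \<tau>"
proof -
  have "\<tau> ! i \<noteq> \<tau> ! j" if "i < j" "j < length \<tau>" for i j
    using assms that by (simp add: nth_eq_iff_index_eq)
  then show ?thesis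
    unfolding contains_21_iff sorted_wrt_iff_nth_less by (meson less_asym neqE)
qed

lemma contains_subpatterns:
  "contains \<tau> [1, 3, 2] \<Longrightarrow> contains \<tau> [2, 1]"
  "contains \<tau> [2, 1, 3] \<Longrightarrow> contains \<tau> [2, 1]"
  "contains \<tau> [3, 2, 1] \<Longrightarrow> contains \<tau> [2, 1]"
  "contains \<tau> [3, 2, 1, 4] \<Longrightarrow> contains \<tau> [3, 2, 1]"
  "contains \<tau> [3, 2, 1, 4] \<Longrightarrow> contains \<tau> [2, 1, 3]"
  "contains \<tau> [4, 2, 1, 3] \<Longrightarrow> contains \<tau> [3, 2, 1]"
  "contains \<tau> [4, 2, 1, 3] \<Longrightarrow> contains \<tau> [2, 1, 3]"
proof -
  note sub = contains_subpattern[where \<tau> = \<tau>]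
  note eval = order_iso_def All_less_Suc eval_nat_numeral
  show "contains \<tau> [1, 3, 2] \<Longrightarrow> contains \<tau> [2, 1]"
    by (erule sub[where \<rho> = "[3, 2]"]) (simp_all add: eval)
  show "contains \<tau> [2, 1, 3] \<Longrightarrow> contains \<tau> [2, 1]"
    by (erule sub[where \<rho> = "[2, 1]"]) (simp_all add: eval)
  show "contains \<tau> [3, 2, 1] \<Longrightarrow> contains \<tau> [2, 1]"
    by (erule sub[where \<rho> = "[3, 2]"]) (simp_all add: eval)
  show "contains \<tau> [3, 2, 1, 4] \<Longrightarrow> contains \<tau> [3, 2, 1]"
    by (erule sub[where \<rho> = "[3, 2, 1]"]) (simp_all add: eval)
  show "contains \<tau> [3, 2, 1, 4] \<Longrightarrow> contains \<tau> [2, 1, 3]"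
    by (erule sub[where \<rho> = "[2, 1, 4]"]) (simp_all add: eval)
  show "contains \<tau> [4, 2, 1, 3] \<Longrightarrow> contains \<tau> [3, 2, 1]"
    by (erule sub[where \<rho> = "[4, 2, 1]"]) (simp_all add: eval)
  show "contains \<tau> [4, 2, 1, 3] \<Longrightarrow> contains \<tau> [2, 1, 3]"
    by (erule sub[where \<rho> = "[2, 1, 3]"]) (simp_all add: eval)
qed

section \<open>Decomposition of 132-avoiding permutations at the maximum\<close>

lemma perms_length: "\<tau> \<in> perms n \<Longrightarrow> length \<tau> = n"
  unfolding perms_def using distinct_card by fastforce

lemma perms_0: "perms 0 = {[]}"
  by (auto simp: perms_def)

lemma finite_perms: "finite (perms n)"
proof -
  have "perms n \<subseteq> {xs. set xs \<subseteq> {1..n} \<and> length xs = n}"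
    using perms_length by (auto simp: perms_def)
  then show ?thesis
    by (rule finite_subset) (simp add: finite_lists_length_eq)
qed

lemma perms_skew_split:
  assumes perm: "A @ B \<in> perms (length A + length B)" and skew: "\<forall>a\<in>set A. \<forall>b\<in>set B. b < a"
  shows "B \<in> perms (length B)" and "map (\<lambda>v. v - length B) A \<in> perms (length A)"
    and "map (\<lambda>v. v + length B) (map (\<lambda>v. v - length B) A) = A"
proof -
  have interval_diff: "{1..k + m} - {1..m} = {Suc m..k + m}" for k m :: nat
    by auto
  let ?k = "length A" and ?m = "length B"
  have union: "set A \<union> set B = {1..?k + ?m}" and "distinct A" "distinct B"
    using perm by (simp_all add: perms_def)
  have "set B \<subseteq> {1..?m}"
  proof
    fix b assume b: "b \<in> set B"
    have "{1..b} \<subseteq> set B"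
    proof
      fix y assume "y \<in> {1..b}"
      moreover have "b \<le> ?k + ?m" using union b by auto
      ultimately have "y \<in> set A \<union> set B" using union by auto
      moreover have "y \<notin> set A" using skew b \<open>y \<in> {1..b}\<close> by fastforce
      ultimately show "y \<in> set B" by blast
    qed
    then have "card {1..b} \<le> card (set B)"
      by (intro card_mono) simp_all
    then show "b \<in> {1..?m}"
      using b union \<open>distinct B\<close> by (auto simp: distinct_card)
  qed
  then have setB: "set B = {1..?m}"
    using \<open>distinct B\<close> by (simp add: card_subset_eq distinct_card)
  then show "B \<in> perms ?m"
    using \<open>distinct B\<close> by (simp add: perms_def)
  have "set A \<inter> set B = {}"
    using perm by (simp add: perms_def)
  then have "set A = {1..?k + ?m} - {1..?m}"
    using union setB by blast
  also have "\<dots> = {Suc ?m..?k + ?m}"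
    by (rule interval_diff)
  finally have setA: "set A = {Suc ?m..?k + ?m}" .
  then show "map (\<lambda>v. v + ?m) (map (\<lambda>v. v - ?m) A) = A"
    unfolding map_map by (intro map_idI) auto
  have "inj_on (\<lambda>v. v - ?m) (set A)"
    using setA by (auto simp: inj_on_def)
  then have "distinct (map (\<lambda>v. v - ?m) A)"
    using \<open>distinct A\<close> by (simp add: distinct_map)
  moreover have "(\<lambda>v. v - m) ` {Suc m..k + m} = {1..k}" for k m :: nat
    by (auto simp: image_iff intro!: bexI[of _ "_ + m"])
  then have "set (map (\<lambda>v. v - ?m) A) = {1..?k}"
    by (simp only: set_map setA)
  ultimately show "map (\<lambda>v. v - ?m) A \<in> perms ?k"
    by (simp add: perms_def)
qed

text \<open>In the usual notation, \<open>join_max \<alpha> \<beta> = (\<alpha> \<oplus> 1) \<ominus> \<beta>\<close>.\<close>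

definition join_max :: "nat list \<Rightarrow> nat list \<Rightarrow> nat list" where
  "join_max \<alpha> \<beta> = map (\<lambda>v. v + length \<beta>) \<alpha> @ Suc (length \<alpha> + length \<beta>) # \<beta>"

lemma join_max_perms:
  assumes "\<alpha> \<in> perms k" and "\<beta> \<in> perms m"
  shows "join_max \<alpha> \<beta> \<in> perms (Suc (k + m))"
proof -
  have "length \<alpha> = k" "length \<beta> = m"
    using assms by (simp_all add: perms_length)
  moreover have "set (map (\<lambda>v. v + m) \<alpha>) = {Suc m..k + m}"
  proof -
    have "(\<lambda>v. v + m) ` {1..k} = {Suc m..k + m}"
      by (simp add: image_add_atLeastAtMost)
    then show ?thesis using assms(1) by (simp add: perms_def)
  qed
  moreover have "distinct (map (\<lambda>v. v + m) \<alpha>)"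
    using assms(1) by (simp add: perms_def distinct_map)
  ultimately show ?thesis
    using assms(2) by (auto simp: perms_def join_max_def)
qed

lemma join_max_inj:
  assumes "\<alpha> \<in> perms k" "\<beta> \<in> perms m" "\<alpha>' \<in> perms k'" "\<beta>' \<in> perms m'"
    and eq: "join_max \<alpha> \<beta> = join_max \<alpha>' \<beta>'"
  shows "\<alpha> = \<alpha>' \<and> \<beta> = \<beta>'"
proof -
  let ?x = "Suc (k + m)"
  have len: "length \<alpha> = k" "length \<beta> = m" "length \<alpha>' = k'" "length \<beta>' = m'"
    using assms by (simp_all add: perms_length)
  then have "k' + m' = k + m"
    using arg_cong[OF eq, of length] by (simp add: join_max_def)
  then have eq': "map (\<lambda>v. v + m) \<alpha> @ ?x # \<beta> = map (\<lambda>v. v + m') \<alpha>' @ ?x # \<beta>'"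
    using eq len by (simp add: join_max_def)
  have "?x \<notin> set (map (\<lambda>v. v + m) \<alpha>)" "?x \<notin> set \<beta>"
    using assms(1,2) by (auto simp: perms_def)
  with eq' have "map (\<lambda>v. v + m) \<alpha> = map (\<lambda>v. v + m') \<alpha>'" and "\<beta> = \<beta>'"
    by (simp_all add: append_Cons_eq_iff)
  moreover have "m = m'"
    using len \<open>\<beta> = \<beta>'\<close> by simp
  moreover have "inj (\<lambda>v::nat. v + m)"
    by (simp add: inj_def)
  ultimately show ?thesis
    by (simp add: inj_map_eq_map)
qed

lemma avoids_132_imp_join_max:
  assumes perm: "\<tau> \<in> perms (Suc n)" and avoid: "\<not> contains \<tau> [1, 3, 2]"
  obtains m \<alpha> \<beta> where "m \<le> n" "\<alpha> \<in> perms (n - m)" "\<beta> \<in> perms m" "\<tau> = join_max \<alpha> \<beta>"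
proof -
  have "distinct \<tau>" and set\<tau>: "set \<tau> = {1..Suc n}"
    using perm by (simp_all add: perms_def)
  then have "Suc n \<in> set \<tau>"
    by simp
  then obtain A B where \<tau>: "\<tau> = A @ Suc n # B"
    by (meson split_list)
  have skew: "\<forall>a\<in>set A. \<forall>b\<in>set B. b < a"
  proof (intro ballI)
    fix a b assume "a \<in> set A" "b \<in> set B"
    then have "a \<noteq> b" "a < Suc n" "b < Suc n"
      using \<open>distinct \<tau>\<close> set\<tau> unfolding \<tau> by (auto simp: le_less)
    have "subseq [a] A" "subseq [Suc n, b] (Suc n # B)"
      using \<open>a \<in> set A\<close> \<open>b \<in> set B\<close> by (simp_all add: subseq_singleton_left)
    then have "subseq ([a] @ [Suc n, b]) \<tau>"
      unfolding \<tau> by (rule list_emb_append_mono)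
    then have "\<not> a < b"
      using avoid order_iso_132[OF _ \<open>b < Suc n\<close>, of a] contains_iff_subseq by auto
    then show "b < a"
      using \<open>a \<noteq> b\<close> by simp
  qed
  have len: "length A + length B = n"
    using perms_length[OF perm] by (simp add: \<tau>)
  have "set (A @ B) = set \<tau> - {Suc n}"
    using \<open>distinct \<tau>\<close> by (auto simp: \<tau>)
  also have "\<dots> = {1..n}"
    by (simp add: set\<tau> atLeastAtMostSuc_conv)
  finally have "A @ B \<in> perms (length A + length B)"
    using \<open>distinct \<tau>\<close> len by (simp add: perms_def \<tau>)
  note split = perms_skew_split[OF this skew]
  define \<alpha> where "\<alpha> = map (\<lambda>v. v - length B) A"
  have "length B \<le> n"
    using len by simp
  moreover have "\<alpha> \<in> perms (n - length B)"
    using split(2) len[symmetric] by (simp add: \<alpha>_def)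
  moreover have "\<tau> = join_max \<alpha> B"
    using split(3) len by (simp add: join_max_def \<alpha>_def \<tau>)
  ultimately show ?thesis
    using split(1) that by blast
qed

lemma contains_join_max:
  assumes "\<alpha> \<in> perms k" and "\<beta> \<in> perms m"
  shows "contains (join_max \<alpha> \<beta>) \<sigma> \<longleftrightarrow>
    (\<exists>\<sigma>' \<sigma>3. \<sigma> = \<sigma>' @ \<sigma>3 \<and> (\<forall>p\<in>set \<sigma>'. \<forall>q\<in>set \<sigma>3. q < p) \<and>
      (\<exists>\<sigma>1 \<sigma>2. \<sigma>' = \<sigma>1 @ \<sigma>2 \<and> (\<forall>p\<in>set \<sigma>1. \<forall>q\<in>set \<sigma>2. p < q) \<and>
        contains \<alpha> \<sigma>1 \<and> length \<sigma>2 \<le> 1) \<and>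
      contains \<beta> \<sigma>3)"
proof -
  let ?A = "map (\<lambda>v. v + m) \<alpha>" and ?x = "Suc (k + m)"
  have "set \<alpha> = {1..k}" "set \<beta> = {1..m}"
    using assms by (simp_all add: perms_def)
  then have direct: "\<forall>a\<in>set ?A. \<forall>b\<in>set [?x]. (a < b \<longleftrightarrow> True) \<and> a \<noteq> b"
    and skew: "\<forall>a\<in>set (?A @ [?x]). \<forall>b\<in>set \<beta>. (a < b \<longleftrightarrow> False) \<and> a \<noteq> b"
    by auto
  have shift: "contains ?A \<sigma>1 \<longleftrightarrow> contains \<alpha> \<sigma>1" for \<sigma>1
    by (rule contains_map_strict_mono) (simp add: strict_mono_def)
  have rise: "(p < q \<longleftrightarrow> True) \<and> p \<noteq> q \<longleftrightarrow> p < q"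
    and fall: "(p < q \<longleftrightarrow> False) \<and> p \<noteq> q \<longleftrightarrow> q < p" for p q :: nat
    by auto
  have join: "join_max \<alpha> \<beta> = (?A @ [?x]) @ \<beta>"
    using assms by (simp add: join_max_def perms_length)
  show ?thesis
    unfolding join contains_append_iff[OF skew] contains_append_iff[OF direct] rise fall shift
      singleton_contains_iff ..
qed

lemma contains_join_max_patterns:
  assumes "\<alpha> \<in> perms k" and "\<beta> \<in> perms m"
  shows "contains (join_max \<alpha> \<beta>) [1, 3, 2] \<longleftrightarrow> contains \<alpha> [1, 3, 2] \<or> contains \<beta> [1, 3, 2]"
    and "contains (join_max \<alpha> \<beta>) [3, 2, 1] \<longleftrightarrow>
      contains \<alpha> [3, 2, 1] \<or> contains \<beta> [2, 1] \<or> contains \<alpha> [2, 1] \<and> \<beta> \<noteq> []"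
    and "contains (join_max \<alpha> \<beta>) [2, 1, 3] \<longleftrightarrow> contains \<alpha> [2, 1] \<or> contains \<beta> [2, 1, 3]"
    and "contains (join_max \<alpha> \<beta>) [3, 2, 1, 4] \<longleftrightarrow>
      contains \<alpha> [3, 2, 1] \<or> contains \<beta> [3, 2, 1, 4]"
    and "contains (join_max \<alpha> \<beta>) [4, 2, 1, 3] \<longleftrightarrow>
      contains \<alpha> [4, 2, 1, 3] \<or> contains \<beta> [2, 1, 3]"
proof -
  note splits = contains_join_max[OF assms] Cons_eq_append_conv ex_disj_distrib
    conj_disj_distribR conj_disj_distribL
  have "contains \<alpha> [3, 2] \<longleftrightarrow> contains \<alpha> [2, 1]"
    by (rule contains_order_iso) (simp add: order_iso_def All_less_Suc eval_nat_numeral)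
  then show "contains (join_max \<alpha> \<beta>) [3, 2, 1] \<longleftrightarrow>
      contains \<alpha> [3, 2, 1] \<or> contains \<beta> [2, 1] \<or> contains \<alpha> [2, 1] \<and> \<beta> \<noteq> []"
    using contains_subpatterns(3)[of \<beta>] by (simp add: splits) blast
  show "contains (join_max \<alpha> \<beta>) [1, 3, 2] \<longleftrightarrow> contains \<alpha> [1, 3, 2] \<or> contains \<beta> [1, 3, 2]"
    by (simp add: splits) blast
  show "contains (join_max \<alpha> \<beta>) [2, 1, 3] \<longleftrightarrow> contains \<alpha> [2, 1] \<or> contains \<beta> [2, 1, 3]"
    using contains_subpatterns(2)[of \<alpha>] by (simp add: splits) blast
  show "contains (join_max \<alpha> \<beta>) [3, 2, 1, 4] \<longleftrightarrow>
      contains \<alpha> [3, 2, 1] \<or> contains \<beta> [3, 2, 1, 4]"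
    using contains_subpatterns(4)[of \<alpha>] by (simp add: splits) blast
  show "contains (join_max \<alpha> \<beta>) [4, 2, 1, 3] \<longleftrightarrow>
      contains \<alpha> [4, 2, 1, 3] \<or> contains \<beta> [2, 1, 3]"
    using contains_subpatterns(7)[of \<beta>] by (simp add: splits) blast
qed

section \<open>Counting\<close>

lemma Av_0: "[] \<notin> set pats \<Longrightarrow> Av 0 pats = {[]}"
  by (auto simp: Av_def avoids_def perms_0)

lemma Av_21: "Av k [[2, 1]] = {[1..<Suc k]}"
proof -
  have "\<tau> \<in> Av k [[2, 1]] \<longleftrightarrow> \<tau> = [1..<Suc k]" for \<tau>
  proof
    assume "\<tau> \<in> Av k [[2, 1]]"
    then have "distinct \<tau>" "set \<tau> = set [1..<Suc k]" "sorted \<tau>"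
      using avoids_21_iff_sorted
      by (auto simp: Av_def avoids_def perms_def strict_sorted_iff atLeastLessThanSuc_atLeastAtMost
          simp del: upt_Suc)
    then show "\<tau> = [1..<Suc k]"
      by (metis sorted_distinct_set_unique sorted_upt distinct_upt)
  next
    assume "\<tau> = [1..<Suc k]"
    then show "\<tau> \<in> Av k [[2, 1]]"
      using avoids_21_iff_sorted[of "[1..<Suc k]"]
      by (simp add: Av_def avoids_def perms_def atLeastLessThanSuc_atLeastAtMost del: upt_Suc)
  qed
  then show ?thesis
    by blast
qed

lemma card_Av_21: "card (Av k [[2, 1]]) = 1"
  by (simp add: Av_21 del: upt_Suc One_nat_def)

lemma card_Av_join_max:
  assumes "[1, 3, 2] \<in> set pats"
    and S: "\<And>k m. {(\<alpha>, \<beta>) \<in> perms k \<times> perms m. join_max \<alpha> \<beta> \<in> Av (Suc (k + m)) pats} = S k m"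
  shows "card (Av (Suc n) pats) = (\<Sum>m\<le>n. card (S (n - m) m))"
proof -
  define D where "D = (SIGMA m:{..n}.
    {(\<alpha>, \<beta>) \<in> perms (n - m) \<times> perms m. join_max \<alpha> \<beta> \<in> Av (Suc n) pats})"
  define f :: "nat \<times> nat list \<times> nat list \<Rightarrow> nat list" where "f = (\<lambda>(m, \<alpha>, \<beta>). join_max \<alpha> \<beta>)"
  have inj: "inj_on f D"
  proof (rule inj_onI)
    fix u v assume "u \<in> D" "v \<in> D" and eq: "f u = f v"
    obtain m \<alpha> \<beta> m' \<alpha>' \<beta>' where uv: "u = (m, \<alpha>, \<beta>)" "v = (m', \<alpha>', \<beta>')"
      by (cases u, cases v) auto
    then have "\<alpha> \<in> perms (n - m)" "\<beta> \<in> perms m" "\<alpha>' \<in> perms (n - m')" "\<beta>' \<in> perms m'"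
      using \<open>u \<in> D\<close> \<open>v \<in> D\<close> by (simp_all add: D_def)
    moreover have "join_max \<alpha> \<beta> = join_max \<alpha>' \<beta>'"
      using eq by (simp add: f_def uv)
    ultimately have "\<alpha> = \<alpha>'" "\<beta> = \<beta>'" "m = m'"
      using join_max_inj perms_length by metis+
    then show "u = v"
      by (simp add: uv)
  qed
  have image: "f ` D = Av (Suc n) pats"
  proof (intro equalityI subsetI)
    fix \<tau> assume "\<tau> \<in> f ` D"
    then show "\<tau> \<in> Av (Suc n) pats"
      unfolding D_def f_def by auto
  next
    fix \<tau> assume \<tau>: "\<tau> \<in> Av (Suc n) pats"
    then have "\<tau> \<in> perms (Suc n)" "\<not> contains \<tau> [1, 3, 2]"
      using assms by (auto simp: Av_def avoids_def)
    then obtain m \<alpha> \<beta> where "m \<le> n" "\<alpha> \<in> perms (n - m)" "\<beta> \<in> perms m" "\<tau> = join_max \<alpha> \<beta>"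
      by (rule avoids_132_imp_join_max)
    then show "\<tau> \<in> f ` D"
      using \<tau> unfolding D_def f_def by (auto intro!: image_eqI[of _ _ "(m, \<alpha>, \<beta>)"])
  qed
  have finite: "finite {(\<alpha>, \<beta>). \<alpha> \<in> perms (n - m) \<and> \<beta> \<in> perms m \<and> P \<alpha> \<beta>}" for m P
    by (rule finite_subset[of _ "perms (n - m) \<times> perms m"]) (auto simp: finite_perms)
  have "card (Av (Suc n) pats) = card D"
    using card_image[OF inj] by (simp add: image)
  also have "\<dots> = (\<Sum>m\<le>n. card {(\<alpha>, \<beta>) \<in> perms (n - m) \<times> perms m. join_max \<alpha> \<beta> \<in> Av (Suc n) pats})"
    unfolding D_def by (rule card_SigmaI) (simp_all add: finite)
  also have "\<dots> = (\<Sum>m\<le>n. card (S (n - m) m))"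
  proof (rule sum.cong)
    fix m assume "m \<in> {..n}"
    then show "card {(\<alpha>, \<beta>) \<in> perms (n - m) \<times> perms m. join_max \<alpha> \<beta> \<in> Av (Suc n) pats} =
        card (S (n - m) m)"
      using S[of "n - m" m] by simp
  qed simp
  finally show ?thesis .
qed

lemma join_max_in_Av:
  assumes "\<alpha> \<in> perms k" and "\<beta> \<in> perms m"
  shows "join_max \<alpha> \<beta> \<in> Av (Suc (k + m)) pats \<longleftrightarrow> (\<forall>\<sigma>\<in>set pats. \<not> contains (join_max \<alpha> \<beta>) \<sigma>)"
  using join_max_perms[OF assms] by (simp add: Av_def avoids_def)

lemma join_max_Av_132_213:
  "{(\<alpha>, \<beta>) \<in> perms k \<times> perms m. join_max \<alpha> \<beta> \<in> Av (Suc (k + m)) [[1, 3, 2], [2, 1, 3]]} =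
   Av k [[2, 1]] \<times> Av m [[1, 3, 2], [2, 1, 3]]"
proof -
  have "join_max \<alpha> \<beta> \<in> Av (Suc (k + m)) [[1, 3, 2], [2, 1, 3]] \<longleftrightarrow>
      \<not> contains \<alpha> [2, 1] \<and> \<not> contains \<beta> [1, 3, 2] \<and> \<not> contains \<beta> [2, 1, 3]"
    if "\<alpha> \<in> perms k" "\<beta> \<in> perms m" for \<alpha> \<beta>
    using contains_subpatterns(1)[of \<alpha>]
    using contains_join_max_patterns[OF that]
    by (simp add: join_max_in_Av[OF that]) blast
  then show ?thesis
    by (auto simp: Av_def avoids_def)
qed

lemma join_max_Av_132_321:
  "{(\<alpha>, \<beta>) \<in> perms k \<times> perms m. join_max \<alpha> \<beta> \<in> Av (Suc (k + m)) [[1, 3, 2], [3, 2, 1]]} =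
   (if m = 0 then Av k [[1, 3, 2], [3, 2, 1]] \<times> {[]} else Av k [[2, 1]] \<times> Av m [[2, 1]])"
proof -
  have "join_max \<alpha> \<beta> \<in> Av (Suc (k + m)) [[1, 3, 2], [3, 2, 1]] \<longleftrightarrow>
      \<not> contains \<alpha> [1, 3, 2] \<and> \<not> contains \<alpha> [3, 2, 1] \<and> \<not> contains \<beta> [2, 1] \<and>
      (\<beta> \<noteq> [] \<longrightarrow> \<not> contains \<alpha> [2, 1])"
    if "\<alpha> \<in> perms k" "\<beta> \<in> perms m" for \<alpha> \<beta>
    using contains_subpatterns(1)[of \<beta>]
    using contains_join_max_patterns[OF that]
    by (simp add: join_max_in_Av[OF that]) blast
  note char = this
  show ?thesis
  proof (cases "m = 0")
    case True
    with char show ?thesis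
      by (auto simp: Av_def[of k] avoids_def perms_0)
  next
    case False
    then have "\<beta> \<noteq> []" if "\<beta> \<in> perms m" for \<beta>
      using that perms_length by fastforce
    with False char contains_subpatterns(1,3) show ?thesis
      by (auto simp: Av_def[of k] Av_def[of m] avoids_def)
  qed
qed

lemma join_max_Av_132_3214_4213:
  "{(\<alpha>, \<beta>) \<in> perms k \<times> perms m.
      join_max \<alpha> \<beta> \<in> Av (Suc (k + m)) [[1, 3, 2], [3, 2, 1, 4], [4, 2, 1, 3]]} =
   Av k [[1, 3, 2], [3, 2, 1]] \<times> Av m [[1, 3, 2], [2, 1, 3]]"
proof -
  have "join_max \<alpha> \<beta> \<in> Av (Suc (k + m)) [[1, 3, 2], [3, 2, 1, 4], [4, 2, 1, 3]] \<longleftrightarrow>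
      \<not> contains \<alpha> [1, 3, 2] \<and> \<not> contains \<alpha> [3, 2, 1] \<and>
      \<not> contains \<beta> [1, 3, 2] \<and> \<not> contains \<beta> [2, 1, 3]"
    if "\<alpha> \<in> perms k" "\<beta> \<in> perms m" for \<alpha> \<beta>
    using contains_subpatterns(5)[of \<beta>] contains_subpatterns(6)[of \<alpha>]
    using contains_join_max_patterns[OF that]
    by (simp add: join_max_in_Av[OF that]) blast
  then show ?thesis
    by (auto simp: Av_def avoids_def)
qed

lemma card_Av_132_213_Suc:
  "card (Av (Suc n) [[1, 3, 2], [2, 1, 3]]) = (\<Sum>m\<le>n. card (Av m [[1, 3, 2], [2, 1, 3]]))"
  using card_Av_join_max[OF _ join_max_Av_132_213]
  by (simp add: card_cartesian_product card_Av_21 del: One_nat_def)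

lemma card_Av_132_321_Suc:
  "card (Av (Suc n) [[1, 3, 2], [3, 2, 1]]) = card (Av n [[1, 3, 2], [3, 2, 1]]) + n"
proof -
  have "card (Av (Suc n) [[1, 3, 2], [3, 2, 1]]) = (\<Sum>m\<le>n. card
      (if m = 0 then Av (n - m) [[1, 3, 2], [3, 2, 1]] \<times> {[]} else Av (n - m) [[2, 1]] \<times> Av m [[2, 1]]))"
    by (rule card_Av_join_max[OF _ join_max_Av_132_321]) simp
  also have "\<dots> = (\<Sum>m\<le>n. if m = 0 then card (Av n [[1, 3, 2], [3, 2, 1]]) else 1)"
    by (rule sum.cong) (simp_all add: card_cartesian_product card_Av_21 del: One_nat_def)
  also have "\<dots> = card (Av n [[1, 3, 2], [3, 2, 1]]) + n"
    by (simp add: sum.atMost_shift)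
  finally show ?thesis .
qed

lemma card_Av_132_3214_4213_Suc:
  "card (Av (Suc n) [[1, 3, 2], [3, 2, 1, 4], [4, 2, 1, 3]]) =
    (\<Sum>m\<le>n. card (Av (n - m) [[1, 3, 2], [3, 2, 1]]) * card (Av m [[1, 3, 2], [2, 1, 3]]))"
  using card_Av_join_max[OF _ join_max_Av_132_3214_4213]
  by (simp add: card_cartesian_product del: One_nat_def)

lemma partial_sums_pow2:
  fixes c :: "nat \<Rightarrow> nat"
  assumes "c 0 = 1" and "\<And>n. c (Suc n) = (\<Sum>m\<le>n. c m)"
  shows "c (Suc n) = 2 ^ n"
proof (induction n)
  case 0
  then show ?case using assms by simp
next
  case (Suc n)
  have "c (Suc (Suc n)) = (\<Sum>m\<le>n. c m) + c (Suc n)"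
    using assms(2) by simp
  also have "\<dots> = 2 * c (Suc n)"
    using assms(2) by simp
  finally show ?case
    using Suc.IH by simp
qed

lemma convolution_closed_form:
  fixes b c :: "nat \<Rightarrow> nat"
  assumes b0: "b 0 = 1" and b_Suc: "\<And>n. b (Suc n) = b n + n"
    and c0: "c 0 = 1" and c_Suc: "\<And>n. c (Suc n) = 2 ^ n"
  shows "(\<Sum>m\<le>n. b (n - m) * c m) + n + 1 = 2 ^ Suc n"
proof (cases n)
  case 0
  then show ?thesis using b0 c0 by simp
next
  case (Suc k)
  define T where "T j = (\<Sum>m\<le>j. b (j - m) * 2 ^ m)" for j
  have T_Suc: "T (Suc j) = b (Suc j) + 2 * T j" for j
    unfolding T_def sum.atMost_Suc_shift by (simp add: sum_distrib_left algebra_simps)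
  have T_closed: "T j + b (Suc j) + j + 2 = 2 ^ (j + 2)" for j
  proof (induction j)
    case 0
    then show ?case by (simp add: T_def b0 b_Suc)
  next
    case (Suc j)
    then show ?case by (simp add: T_Suc b_Suc)
  qed
  have "(\<Sum>m\<le>Suc k. b (Suc k - m) * c m) = b (Suc k) + T k"
    unfolding sum.atMost_Suc_shift T_def by (simp add: c0 c_Suc)
  then show ?thesis
    using T_closed[of k] Suc by simp
qed

theorem mainTheorem3:
  fixes n :: nat
  shows "int (card (Av n [[1,3,2], [3,2,1,4], [4,2,1,3]])) = 2 ^ n - int n"
proof (cases n)
  case 0
  then show ?thesis by (simp add: Av_0)
next
  case (Suc k)
  have "card (Av (Suc k) [[1, 3, 2], [3, 2, 1, 4], [4, 2, 1, 3]]) + k + 1 = 2 ^ Suc k"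
    unfolding card_Av_132_3214_4213_Suc
  proof (rule convolution_closed_form)
    show "card (Av (Suc m) [[1, 3, 2], [2, 1, 3]]) = 2 ^ m" for m
      by (rule partial_sums_pow2) (simp_all add: Av_0 card_Av_132_213_Suc del: One_nat_def)
  qed (simp_all add: Av_0 card_Av_132_321_Suc del: One_nat_def)
  from arg_cong[OF this, of int] show ?thesis
    using Suc by simp
qed

end
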